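(* Let $G=(V,E)$ be a simple undirected graph, let $E^2=\{\{u,v\}\in\binom{V}{2}:\operatorname{dist}_G(u,v)\le 2\}$, and let $(\hat x,\hat y)$ with $\hat x\in\mathbb{Z}_+^{E^2}$ and $\hat y\in\{0,1\}^V$ be an integer point satisfying $$\frac{\sum_{i\in N_G(u)\cap N_G(v)}(1-\hat y_i)}{|N_G(u)\cap N_G(v)|}-\hat y_u-\hat y_v\le \hat x_{uv}\quad\text{for all }\{u,v\}\in E^2\setminus E.$$ Then $1-\hat y_u-\hat y_v-\hat y_i\le \hat x_{uv}$ for all $\{u,v\}\in E^2\setminus E$ and all $i\in N_G(u)\cap N_G(v)$.
   Context: $N_G(v)$ denotes the set of neighbors of $v$ in $G$ and $\operatorname{dist}_G$ the hop distance in $G$. For $\{u,v\}\in E^2\setminus E$ the vertices are at distance exactly $2$, so $N_G(u)\cap N_G(v)\neq\emptyset$. *)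

theory Defs
  imports Complex_Main
begin

definition simple_graph :: "'a set \<Rightarrow> ('a \<Rightarrow> 'a \<Rightarrow> bool) \<Rightarrow> bool" where
  "simple_graph V E \<longleftrightarrow> finite V \<and> (\<forall>u v. E u v \<longrightarrow> u \<in> V \<and> v \<in> V)
     \<and> (\<forall>u v. E u v \<longrightarrow> E v u) \<and> (\<forall>v. \<not> E v v)"

definition nbrs :: "'a set \<Rightarrow> ('a \<Rightarrow> 'a \<Rightarrow> bool) \<Rightarrow> 'a \<Rightarrow> 'a set" where
  "nbrs V E v = {w \<in> V. E v w}"

definition in_E2 :: "'a set \<Rightarrow> ('a \<Rightarrow> 'a \<Rightarrow> bool) \<Rightarrow> 'a \<Rightarrow> 'a \<Rightarrow> bool" where
  "in_E2 V E u v \<longleftrightarrow> u \<in> V \<and> v \<in> V \<and> u \<noteq> v \<and> (E u v \<or> (\<exists>w\<in>V. E u w \<and> E w v))"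

end

theory Submission
  imports Defs
begin

text \<open>If y is zero at u, v and a common neighbour i, then 1 - y i > 0 makes the average on the
  left of the fractional inequality strictly positive, so the integer x u v is at least 1.
  Otherwise one of y u, y v, y i equals 1 and the claimed bound is at most 0 \<le> x u v.\<close>

lemma sum_divide_card_pos:
  fixes f :: "'a \<Rightarrow> real"
  assumes "finite A" and "\<And>j. j \<in> A \<Longrightarrow> f j \<ge> 0" and "i \<in> A" and "f i > 0"
  shows "sum f A / card A > 0"
proof -
  have "sum f A \<ge> f i"
    using assms by (intro member_le_sum) auto
  moreover have "card A > 0"
    using assms(1,3) by (auto simp: card_gt_0_iff)
  ultimately show ?thesis
    using assms(4) by simp
qed

lemma finite_nbrs:
  assumes "simple_graph V E"
  shows "finite (nbrs V E v)"
  using assms by (simp add: simple_graph_def nbrs_def)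

theorem lemma2:
  fixes V :: "'a set" and E :: "'a \<Rightarrow> 'a \<Rightarrow> bool"
    and x :: "'a \<Rightarrow> 'a \<Rightarrow> int" and y :: "'a \<Rightarrow> int"
  assumes G: "simple_graph V E"
    and x_sym: "\<And>u v. in_E2 V E u v \<Longrightarrow> x u v = x v u"
    and x_nonneg: "\<And>u v. in_E2 V E u v \<Longrightarrow> x u v \<ge> 0"
    and y_bin: "\<And>v. v \<in> V \<Longrightarrow> y v \<in> {0, 1}"
    and ineq: "\<And>u v. in_E2 V E u v \<Longrightarrow> \<not> E u v \<Longrightarrow>
       (\<Sum>i\<in>nbrs V E u \<inter> nbrs V E v. real_of_int (1 - y i)) / real (card (nbrs V E u \<inter> nbrs V E v))
         - real_of_int (y u) - real_of_int (y v) \<le> real_of_int (x u v)"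
  shows "\<forall>u v i. in_E2 V E u v \<and> \<not> E u v \<and> i \<in> nbrs V E u \<inter> nbrs V E v \<longrightarrow>
           1 - y u - y v - y i \<le> x u v"
proof (intro allI impI)
  fix u v i
  assume uv: "in_E2 V E u v \<and> \<not> E u v \<and> i \<in> nbrs V E u \<inter> nbrs V E v"
  let ?N = "nbrs V E u \<inter> nbrs V E v"
  have "u \<in> V" "v \<in> V" "i \<in> V"
    using uv by (auto simp: in_E2_def nbrs_def)
  then have y_bin_uvi: "y u \<in> {0, 1}" "y v \<in> {0, 1}" "y i \<in> {0, 1}"
    using y_bin by auto
  show "1 - y u - y v - y i \<le> x u v"
  proof (cases "y u = 0 \<and> y v = 0 \<and> y i = 0")
    case True
    have "(\<Sum>j\<in>?N. real_of_int (1 - y j)) / card ?N > 0"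
      using uv True finite_nbrs[OF G] y_bin
      by (intro sum_divide_card_pos) (force simp: nbrs_def)+
    then have "x u v > 0"
      using ineq[of u v] uv True by force
    then show ?thesis
      using True by simp
  next
    case False
    then show ?thesis
      using y_bin_uvi x_nonneg[of u v] uv by auto
  qed
qed

end
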